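(* Let $A_1,B_1,B_2,C_1,C_2\in\mathbb{C}^{r\times r}$ with $C_1+mI,C_2+mI$ invertible for all $m\ge0$, $A_1B_1=B_1A_1$, $B_2C_i=C_iB_2$ ($i=1,2$) and $C_1C_2=C_2C_1$. Let $n\ge1$ and suppose $A_1+mI$ is invertible for all $m\ge0$. Then $$F_{14}[A_1+nI]=F_{14}+x_1B_1\Big[\sum_{n_1=1}^nF_{14}[A_1+n_1I,B_1+I,C_1+I]\Big]C_1^{-1}+x_2\Big[\sum_{n_1=1}^nF_{14}[A_1+n_1I,B_2+I,C_2+I]\Big]B_2C_2^{-1}+x_3B_1\Big[\sum_{n_1=1}^nF_{14}[A_1+n_1I,B_1+I,C_2+I]\Big]C_2^{-1}.$$ Furthermore, if $A_1-n_1I$ is invertible for $0\le n_1\le n$, then $$F_{14}[A_1-nI]=F_{14}-x_1B_1\Big[\sum_{n_1=0}^{n-1}F_{14}[A_1-n_1I,B_1+I,C_1+I]\Big]C_1^{-1}-x_2\Big[\sum_{n_1=0}^{n-1}F_{14}[A_1-n_1I,B_2+I,C_2+I]\Big]B_2C_2^{-1}-x_3B_1\Big[\sum_{n_1=0}^{n-1}F_{14}[A_1-n_1I,B_1+I,C_2+I]\Big]C_2^{-1}.$$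
   Context: For $M\in\mathbb{C}^{r\times r}$: $(M)_0=I$, $(M)_m=M(M+I)\cdots(M+(m-1)I)$, $(M)^{-1}_m=((M)_m)^{-1}$. The three-variable Lauricella matrix function $$F_{14}=F_{14}[A_1,B_1,B_2;C_1,C_2;x_1,x_2,x_3]=\sum_{m_1,m_2,m_3\ge0}(A_1)_{m_1+m_2+m_3}(B_1)_{m_1+m_3}(B_2)_{m_2}(C_1)^{-1}_{m_1}(C_2)^{-1}_{m_2+m_3}\frac{x_1^{m_1}x_2^{m_2}x_3^{m_3}}{m_1!m_2!m_3!},$$ with scalar variables $x_i$ and matrix products in the written order; identities are of formal power series in the $x_i$. $F_{14}[\dots]$ lists only the shifted parameters, all others unchanged. *)

theory Defs
  imports "HOL-Analysis.Analysis"
begin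

type_synonym 'n cmat = "complex ^ 'n ^ 'n"

text \<open>Three-variable formal power series with matrix coefficients are represented by
  their coefficient functions: G m1 m2 m3 is the coefficient of x1^m1 x2^m2 x3^m3.\<close>
type_synonym 'n mfps3 = "nat \<Rightarrow> nat \<Rightarrow> nat \<Rightarrow> 'n cmat"

fun mpoch :: "'n::finite cmat \<Rightarrow> nat \<Rightarrow> 'n cmat" where
  "mpoch M 0 = mat 1"
| "mpoch M (Suc m) = mpoch M m ** (M + mat (of_nat m))"

definition mpoch_inv :: "'n::finite cmat \<Rightarrow> nat \<Rightarrow> 'n cmat" where
  "mpoch_inv M m = matrix_inv (mpoch M m)"

definition F14 :: "'n::finite cmat \<Rightarrow> 'n cmat \<Rightarrow> 'n cmat \<Rightarrow> 'n cmat \<Rightarrow> 'n cmat \<Rightarrow> 'n mfps3" where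
  "F14 A1 B1 B2 C1 C2 = (\<lambda>m1 m2 m3.
     (1 / real (fact m1 * fact m2 * fact m3)) *\<^sub>R
     (mpoch A1 (m1 + m2 + m3) ** mpoch B1 (m1 + m3) ** mpoch B2 m2
      ** mpoch_inv C1 m1 ** mpoch_inv C2 (m2 + m3)))"

definition mulx1 :: "'n mfps3 \<Rightarrow> 'n::finite mfps3" where
  "mulx1 G = (\<lambda>m1 m2 m3. if m1 = 0 then 0 else G (m1 - 1) m2 m3)"
definition mulx2 :: "'n mfps3 \<Rightarrow> 'n::finite mfps3" where
  "mulx2 G = (\<lambda>m1 m2 m3. if m2 = 0 then 0 else G m1 (m2 - 1) m3)"
definition mulx3 :: "'n mfps3 \<Rightarrow> 'n::finite mfps3" where
  "mulx3 G = (\<lambda>m1 m2 m3. if m3 = 0 then 0 else G m1 m2 (m3 - 1))"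

end

theory Submission
  imports Defs
begin

text \<open>Since $(A+I)_k = (A)_k + k\,(A+I)_{k-1}$, the coefficient of $x_1^{m_1}x_2^{m_2}x_3^{m_3}$
  in $F_{14}[A+I] - F_{14}$ is $(m_1+m_2+m_3)/(m_1!m_2!m_3!)$ times a product containing
  $(A+I)_{m_1+m_2+m_3-1}$. Splitting the factor $m_1+m_2+m_3$ into its three summands, each part
  becomes a shifted coefficient of $F_{14}[A+I,\dots]$ by $m_i/m_i! = 1/(m_i-1)!$,
  $(B)_{k+1} = B(B+I)_k$ and $(C)^{-1}_{k+1} = (C+I)^{-1}_k C^{-1}$, once the extracted
  factors $B_1$, $B_2$, $C_i^{-1}$ are moved to the place the statement prescribes using the
  commutation hypotheses. This proves the case $n = 1$ for any $A$; iterating it upwards from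
  $A_1$ and downwards from $A_1 - nI$ telescopes to both identities.\<close>

lemma matrix_add_rdistrib: "((A::'a::semiring_1^'n^'m) + B) ** C = A ** C + B ** C"
  by (vector matrix_matrix_mult_def sum.distrib distrib_right)

lemma matrix_diff_rdistrib: "((A::'a::ring_1^'n^'m) - B) ** C = A ** C - B ** C"
  by (vector matrix_matrix_mult_def sum_subtractf left_diff_distrib)

lemma matrix_diff_ldistrib: "(C::'a::ring_1^'n^'m) ** (A - B) = C ** A - C ** B"
  by (vector matrix_matrix_mult_def sum_subtractf right_diff_distrib)

lemma matrix_mul_sum_left: "(X::'a::semiring_1^'n^'m) ** sum f S = (\<Sum>i\<in>S. X ** f i)"
  by (induct S rule: infinite_finite_induct) (simp_all add: matrix_add_ldistrib)

lemma matrix_mul_sum_right: "sum f S ** (X::'a::semiring_1^'n^'m) = (\<Sum>i\<in>S. f i ** X)"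
  by (induct S rule: infinite_finite_induct) (simp_all add: matrix_add_rdistrib)

lemma mat_add: "mat (a + b) = (mat a + mat b :: 'a::semiring_1^'n^'n)"
  by (vector mat_def)

lemma matrix_mul_mat_commute: "(X::'a::comm_semiring_1^'n^'n) ** mat c = mat c ** X"
  by (simp add: vec_eq_iff matrix_matrix_mult_def mat_def if_distrib if_distribR mult.commute
      cong: if_cong)

lemma matrix_mul_mat_of_nat: "(X::'a::real_algebra_1^'n^'n) ** mat (of_nat k) = real k *\<^sub>R X"
proof -
  have "mat (of_nat k) = (real k *\<^sub>R mat 1 :: 'a^'n^'n)"
    by (vector mat_def scaleR_conv_of_real)
  then show ?thesis by (simp add: matrix_scalar_ac)
qed

lemma commute_add_mat:
  "(X::'a::comm_semiring_1^'n^'n) ** A = A ** X \<Longrightarrow> X ** (A + mat c) = (A + mat c) ** X"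
  by (simp add: matrix_add_ldistrib matrix_add_rdistrib matrix_mul_mat_commute)

lemma commute_diff_mat:
  "(X::'a::comm_ring_1^'n^'n) ** A = A ** X \<Longrightarrow> X ** (A - mat c) = (A - mat c) ** X"
  by (simp add: matrix_diff_ldistrib matrix_diff_rdistrib matrix_mul_mat_commute)

lemma matrix_inv_right: "invertible (A::'a::semiring_1^'n^'m) \<Longrightarrow> A ** matrix_inv A = mat 1"
  unfolding invertible_def matrix_inv_def by (rule someI2_ex) auto

lemma matrix_inv_left: "invertible (A::'a::semiring_1^'n^'m) \<Longrightarrow> matrix_inv A ** A = mat 1"
  unfolding invertible_def matrix_inv_def by (rule someI2_ex) auto

lemma matrix_inv_unique:
  assumes "(A::'a::semiring_1^'n^'n) ** B = mat 1" and "B ** A = mat 1"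
  shows "matrix_inv A = B"
proof -
  have "invertible A" using assms invertible_def by blast
  have "matrix_inv A = matrix_inv A ** (A ** B)" using assms by simp
  also have "\<dots> = (matrix_inv A ** A) ** B" by (simp add: matrix_mul_assoc)
  also have "\<dots> = B" using matrix_inv_left[OF \<open>invertible A\<close>] by simp
  finally show ?thesis .
qed

lemma matrix_inv_mult:
  assumes "invertible (A::'a::semiring_1^'n^'n)" and "invertible (B::'a^'n^'n)"
  shows "matrix_inv (A ** B) = matrix_inv B ** matrix_inv A"
proof (rule matrix_inv_unique)
  show "A ** B ** (matrix_inv B ** matrix_inv A) = mat 1"
    using matrix_inv_right[OF assms(1)] matrix_inv_right[OF assms(2)]
    by (metis matrix_mul_assoc matrix_mul_rid)
  show "matrix_inv B ** matrix_inv A ** (A ** B) = mat 1"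
    using matrix_inv_left[OF assms(1)] matrix_inv_left[OF assms(2)]
    by (metis matrix_mul_assoc matrix_mul_rid)
qed

lemma commute_matrix_inv:
  assumes "(X::'a::semiring_1^'n^'n) ** Y = Y ** X" and "invertible Y"
  shows "X ** matrix_inv Y = matrix_inv Y ** X"
proof -
  have "X ** matrix_inv Y = matrix_inv Y ** (Y ** X) ** matrix_inv Y"
    using matrix_inv_left[OF assms(2)] by (simp add: matrix_mul_assoc)
  also have "\<dots> = matrix_inv Y ** (X ** Y) ** matrix_inv Y"
    using assms(1) by simp
  also have "\<dots> = matrix_inv Y ** X ** (Y ** matrix_inv Y)"
    by (simp add: matrix_mul_assoc)
  also have "\<dots> = matrix_inv Y ** X"
    using matrix_inv_right[OF assms(2)] by simp
  finally show ?thesis .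
qed

lemma mpoch_commute:
  assumes "X ** A = A ** X"
  shows "X ** mpoch A m = mpoch A m ** X"
proof (induction m)
  case 0
  then show ?case by simp
next
  case (Suc m)
  have "X ** mpoch A (Suc m) = mpoch A m ** (X ** (A + mat (of_nat m)))"
    using Suc.IH by (simp add: matrix_mul_assoc)
  also have "\<dots> = mpoch A (Suc m) ** X"
    using commute_add_mat[OF assms] by (simp add: matrix_mul_assoc)
  finally show ?case .
qed

lemma mpoch_rec: "mpoch A (Suc m) = A ** mpoch (A + mat 1) m"
proof (induction m)
  case 0
  then show ?case by simp
next
  case (Suc m)
  have "mpoch A (Suc (Suc m)) = A ** mpoch (A + mat 1) m ** (A + mat (of_nat (Suc m)))"
    using Suc.IH by simp
  also have "A + mat (of_nat (Suc m)) = A + mat 1 + mat (of_nat m)"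
    by (simp add: mat_add add.assoc)
  finally show ?case by (simp add: matrix_mul_assoc)
qed

lemma mpoch_rec': "mpoch A (Suc m) = mpoch (A + mat 1) m ** A"
  using mpoch_rec mpoch_commute[OF commute_add_mat[OF refl]] by metis

lemma mpoch_shift_Suc:
  "mpoch (A + mat 1) (Suc m) = mpoch A (Suc m) + real (Suc m) *\<^sub>R mpoch (A + mat 1) m"
proof -
  have "mpoch (A + mat 1) (Suc m) = mpoch (A + mat 1) m ** (A + mat (of_nat (Suc m)))"
    by (simp add: mat_add add.assoc)
  also have "\<dots> = mpoch (A + mat 1) m ** A + real (Suc m) *\<^sub>R mpoch (A + mat 1) m"
    by (simp only: matrix_add_ldistrib matrix_mul_mat_of_nat)
  finally show ?thesis by (simp only: mpoch_rec')
qed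

lemma invertible_mpoch:
  assumes "\<forall>k::nat. invertible (C + mat (of_nat k))"
  shows "invertible (mpoch C m)"
proof (induction m)
  case 0
  then show ?case by (auto simp: invertible_def)
next
  case (Suc m)
  then show ?case using assms invertible_mult by auto
qed

lemma invertible_shift:
  assumes "\<forall>k::nat. invertible (C + mat (of_nat k))"
  shows "\<forall>k::nat. invertible (C + mat 1 + mat (of_nat k))"
proof
  fix k :: nat
  have "C + mat 1 + mat (of_nat k) = C + mat (of_nat (Suc k))"
    by (simp add: mat_add add.assoc)
  then show "invertible (C + mat 1 + mat (of_nat k))" using assms by metis
qed

lemma mpoch_inv_rec:
  assumes "\<forall>k::nat. invertible (C + mat (of_nat k))"
  shows "mpoch_inv C (Suc m) = mpoch_inv (C + mat 1) m ** matrix_inv C"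
proof -
  have "invertible C" using assms[rule_format, of 0] by simp
  then show ?thesis
    unfolding mpoch_inv_def mpoch_rec
    using matrix_inv_mult invertible_mpoch[OF invertible_shift[OF assms]] by blast
qed

lemma mpoch_inv_commute:
  assumes "X ** C = C ** X" and "\<forall>k::nat. invertible (C + mat (of_nat k))"
  shows "X ** mpoch_inv C m = mpoch_inv C m ** X"
  unfolding mpoch_inv_def
  by (rule commute_matrix_inv[OF mpoch_commute[OF assms(1)] invertible_mpoch[OF assms(2)]])

lemma fact_Suc_divide:
  "real (Suc k) / real (fact (Suc k) * p) = 1 / real (fact k * p)"
proof -
  have "real (fact (Suc k) * p) = real (Suc k) * real (fact k * p)"
    by (simp only: fact_Suc of_nat_mult of_nat_id mult.assoc)
  then show ?thesis by (simp del: of_nat_Suc of_nat_mult)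
qed

lemma matrix_mul_commute_assoc:
  "(X::'a::semiring_1^'n^'n) ** B = B ** X \<Longrightarrow> X ** (B ** Z) = B ** (X ** Z)"
  by (metis matrix_mul_assoc)

lemma F14_coeff_absorb_x1:
  fixes A B1 B2 C1 C2 :: "'n::finite cmat"
  assumes C1inv: "\<forall>k::nat. invertible (C1 + mat (of_nat k))"
    and C2inv: "\<forall>k::nat. invertible (C2 + mat (of_nat k))"
    and AB: "A ** B1 = B1 ** A" and CC: "C1 ** C2 = C2 ** C1"
    and M: "m1 + m2 + m3 = Suc M"
  shows "(real m1 / real (fact m1 * fact m2 * fact m3)) *\<^sub>R
      (mpoch A M ** mpoch B1 (m1 + m3) ** mpoch B2 m2 ** mpoch_inv C1 m1 ** mpoch_inv C2 (m2 + m3))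
    = B1 ** mulx1 (F14 A (B1 + mat 1) B2 (C1 + mat 1) C2) m1 m2 m3 ** matrix_inv C1"
proof (cases m1)
  case 0
  then show ?thesis by (simp add: mulx1_def)
next
  case (Suc k)
  have AB_poch: "mpoch A M ** B1 = B1 ** mpoch A M"
    using mpoch_commute[OF AB[symmetric]] by metis
  have "mpoch_inv C2 (m2 + m3) ** matrix_inv C1 = matrix_inv C1 ** mpoch_inv C2 (m2 + m3)"
    using C1inv[rule_format, of 0] mpoch_inv_commute[OF CC C2inv]
    by (intro commute_matrix_inv) simp_all
  then have "mpoch A M ** mpoch B1 (m1 + m3) ** mpoch B2 m2 ** mpoch_inv C1 m1
      ** mpoch_inv C2 (m2 + m3)
    = B1 ** (mpoch A M ** mpoch (B1 + mat 1) (k + m3) ** mpoch B2 m2 ** mpoch_inv (C1 + mat 1) k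
      ** mpoch_inv C2 (m2 + m3)) ** matrix_inv C1"
    by (simp del: mpoch.simps add: Suc mpoch_rec mpoch_inv_rec[OF C1inv]
        matrix_mul_assoc[symmetric] matrix_mul_commute_assoc[OF AB_poch])
  moreover have "real m1 / real (fact m1 * fact m2 * fact m3) = 1 / real (fact k * fact m2 * fact m3)"
    using fact_Suc_divide[of k "fact m2 * fact m3"] by (simp add: Suc mult.assoc del: of_nat_Suc)
  ultimately show ?thesis
    using M by (simp add: Suc mulx1_def F14_def matrix_scalar_ac scalar_matrix_assoc[symmetric])
qed

lemma F14_coeff_absorb_x2:
  fixes A B1 B2 C1 C2 :: "'n::finite cmat"
  assumes C1inv: "\<forall>k::nat. invertible (C1 + mat (of_nat k))"
    and C2inv: "\<forall>k::nat. invertible (C2 + mat (of_nat k))"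
    and BC1: "B2 ** C1 = C1 ** B2" and BC2: "B2 ** C2 = C2 ** B2"
    and M: "m1 + m2 + m3 = Suc M"
  shows "(real m2 / real (fact m1 * fact m2 * fact m3)) *\<^sub>R
      (mpoch A M ** mpoch B1 (m1 + m3) ** mpoch B2 m2 ** mpoch_inv C1 m1 ** mpoch_inv C2 (m2 + m3))
    = mulx2 (F14 A B1 (B2 + mat 1) C1 (C2 + mat 1)) m1 m2 m3 ** B2 ** matrix_inv C2"
proof (cases m2)
  case 0
  then show ?thesis by (simp add: mulx2_def)
next
  case (Suc k)
  have B2_C1: "B2 ** mpoch_inv C1 m1 = mpoch_inv C1 m1 ** B2"
    by (rule mpoch_inv_commute[OF BC1 C1inv])
  have B2_C2: "B2 ** mpoch_inv (C2 + mat 1) (k + m3) = mpoch_inv (C2 + mat 1) (k + m3) ** B2"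
    by (rule mpoch_inv_commute[OF commute_add_mat[OF BC2] invertible_shift[OF C2inv]])
  have "mpoch A M ** mpoch B1 (m1 + m3) ** mpoch B2 m2 ** mpoch_inv C1 m1 ** mpoch_inv C2 (m2 + m3)
    = mpoch A M ** mpoch B1 (m1 + m3) ** mpoch (B2 + mat 1) k ** mpoch_inv C1 m1
      ** mpoch_inv (C2 + mat 1) (k + m3) ** B2 ** matrix_inv C2"
    by (simp del: mpoch.simps add: Suc mpoch_rec' mpoch_inv_rec[OF C2inv]
        matrix_mul_assoc[symmetric] matrix_mul_commute_assoc[OF B2_C1]
        matrix_mul_commute_assoc[OF B2_C2])
  moreover have "real m2 / real (fact m1 * fact m2 * fact m3) = 1 / real (fact m1 * fact k * fact m3)"
    using fact_Suc_divide[of k "fact m1 * fact m3"] by (simp add: Suc ac_simps del: of_nat_Suc)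
  ultimately show ?thesis
    using M by (simp add: Suc mulx2_def F14_def matrix_scalar_ac scalar_matrix_assoc[symmetric])
qed

lemma F14_coeff_absorb_x3:
  fixes A B1 B2 C1 C2 :: "'n::finite cmat"
  assumes C2inv: "\<forall>k::nat. invertible (C2 + mat (of_nat k))"
    and AB: "A ** B1 = B1 ** A"
    and M: "m1 + m2 + m3 = Suc M"
  shows "(real m3 / real (fact m1 * fact m2 * fact m3)) *\<^sub>R
      (mpoch A M ** mpoch B1 (m1 + m3) ** mpoch B2 m2 ** mpoch_inv C1 m1 ** mpoch_inv C2 (m2 + m3))
    = B1 ** mulx3 (F14 A (B1 + mat 1) B2 C1 (C2 + mat 1)) m1 m2 m3 ** matrix_inv C2"
proof (cases m3)
  case 0
  then show ?thesis by (simp add: mulx3_def)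
next
  case (Suc k)
  have AB_poch: "mpoch A M ** B1 = B1 ** mpoch A M"
    using mpoch_commute[OF AB[symmetric]] by metis
  have "mpoch A M ** mpoch B1 (m1 + m3) ** mpoch B2 m2 ** mpoch_inv C1 m1 ** mpoch_inv C2 (m2 + m3)
    = B1 ** (mpoch A M ** mpoch (B1 + mat 1) (m1 + k) ** mpoch B2 m2 ** mpoch_inv C1 m1
      ** mpoch_inv (C2 + mat 1) (m2 + k)) ** matrix_inv C2"
    by (simp del: mpoch.simps add: Suc mpoch_rec mpoch_inv_rec[OF C2inv]
        matrix_mul_assoc[symmetric] matrix_mul_commute_assoc[OF AB_poch])
  moreover have "real m3 / real (fact m1 * fact m2 * fact m3) = 1 / real (fact m1 * fact m2 * fact k)"
    using fact_Suc_divide[of k "fact m1 * fact m2"] by (simp add: Suc ac_simps del: of_nat_Suc)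
  ultimately show ?thesis
    using M by (simp add: Suc mulx3_def F14_def matrix_scalar_ac scalar_matrix_assoc[symmetric])
qed

definition F14_increment :: "'n::finite cmat \<Rightarrow> 'n cmat \<Rightarrow> 'n cmat \<Rightarrow> 'n cmat \<Rightarrow> 'n cmat \<Rightarrow> 'n mfps3"
  where "F14_increment A B1 B2 C1 C2 = (\<lambda>m1 m2 m3.
      B1 ** mulx1 (F14 A (B1 + mat 1) B2 (C1 + mat 1) C2) m1 m2 m3 ** matrix_inv C1
    + mulx2 (F14 A B1 (B2 + mat 1) C1 (C2 + mat 1)) m1 m2 m3 ** B2 ** matrix_inv C2
    + B1 ** mulx3 (F14 A (B1 + mat 1) B2 C1 (C2 + mat 1)) m1 m2 m3 ** matrix_inv C2)"

lemma F14_add_one: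
  fixes A B1 B2 C1 C2 :: "'n::finite cmat"
  assumes C1inv: "\<forall>k::nat. invertible (C1 + mat (of_nat k))"
    and C2inv: "\<forall>k::nat. invertible (C2 + mat (of_nat k))"
    and AB: "A ** B1 = B1 ** A" and BC1: "B2 ** C1 = C1 ** B2" and BC2: "B2 ** C2 = C2 ** B2"
    and CC: "C1 ** C2 = C2 ** C1"
  shows "F14 (A + mat 1) B1 B2 C1 C2 m1 m2 m3
    = F14 A B1 B2 C1 C2 m1 m2 m3 + F14_increment (A + mat 1) B1 B2 C1 C2 m1 m2 m3"
proof (cases "m1 + m2 + m3")
  case 0
  then show ?thesis by (simp add: F14_def F14_increment_def mulx1_def mulx2_def mulx3_def)
next
  case (Suc M)
  define c where "c = real (fact m1 * fact m2 * fact m3)"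
  define Q where "Q = mpoch (A + mat 1) M ** mpoch B1 (m1 + m3) ** mpoch B2 m2
    ** mpoch_inv C1 m1 ** mpoch_inv C2 (m2 + m3)"
  have AB': "(A + mat 1) ** B1 = B1 ** (A + mat 1)"
    using commute_add_mat[OF AB[symmetric]] by simp
  have "F14 (A + mat 1) B1 B2 C1 C2 m1 m2 m3 = F14 A B1 B2 C1 C2 m1 m2 m3 + (real (Suc M) / c) *\<^sub>R Q"
    unfolding F14_def Suc mpoch_shift_Suc
    by (simp del: mpoch.simps add: Suc c_def Q_def matrix_add_rdistrib
        scalar_matrix_assoc[symmetric] scaleR_add_right)
  also have "(real (Suc M) / c) *\<^sub>R Q
    = (real m1 / c) *\<^sub>R Q + (real m2 / c) *\<^sub>R Q + (real m3 / c) *\<^sub>R Q"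
    unfolding Suc[symmetric] by (simp add: add_divide_distrib scaleR_add_left)
  also have "\<dots> = F14_increment (A + mat 1) B1 B2 C1 C2 m1 m2 m3"
    unfolding F14_increment_def c_def Q_def
    using F14_coeff_absorb_x1[OF C1inv C2inv AB' CC Suc] F14_coeff_absorb_x2[OF C1inv C2inv BC1 BC2 Suc]
      F14_coeff_absorb_x3[OF C2inv AB' Suc]
    by simp
  finally show ?thesis .
qed

lemma F14_add_of_nat:
  fixes A B1 B2 C1 C2 :: "'n::finite cmat"
  assumes C1inv: "\<forall>k::nat. invertible (C1 + mat (of_nat k))"
    and C2inv: "\<forall>k::nat. invertible (C2 + mat (of_nat k))"
    and AB: "A ** B1 = B1 ** A" and BC1: "B2 ** C1 = C1 ** B2" and BC2: "B2 ** C2 = C2 ** B2"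
    and CC: "C1 ** C2 = C2 ** C1"
  shows "F14 (A + mat (of_nat n)) B1 B2 C1 C2 m1 m2 m3 = F14 A B1 B2 C1 C2 m1 m2 m3
    + (\<Sum>j = 1..n. F14_increment (A + mat (of_nat j)) B1 B2 C1 C2 m1 m2 m3)"
proof (induction n)
  case 0
  then show ?case by simp
next
  case (Suc n)
  have shift: "A + mat (of_nat (Suc n)) = A + mat (of_nat n) + mat 1"
    by (simp add: mat_add algebra_simps)
  have "(A + mat (of_nat n)) ** B1 = B1 ** (A + mat (of_nat n))"
    using commute_add_mat[OF AB[symmetric]] by simp
  from F14_add_one[OF C1inv C2inv this BC1 BC2 CC, folded shift] Suc.IH show ?case
    by (simp del: of_nat_Suc add: add.assoc)
qed

lemma F14_diff_of_nat:
  fixes A B1 B2 C1 C2 :: "'n::finite cmat"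
  assumes C1inv: "\<forall>k::nat. invertible (C1 + mat (of_nat k))"
    and C2inv: "\<forall>k::nat. invertible (C2 + mat (of_nat k))"
    and AB: "A ** B1 = B1 ** A" and BC1: "B2 ** C1 = C1 ** B2" and BC2: "B2 ** C2 = C2 ** B2"
    and CC: "C1 ** C2 = C2 ** C1"
  shows "F14 (A - mat (of_nat n)) B1 B2 C1 C2 m1 m2 m3 = F14 A B1 B2 C1 C2 m1 m2 m3
    - (\<Sum>j<n. F14_increment (A - mat (of_nat j)) B1 B2 C1 C2 m1 m2 m3)"
proof (induction n)
  case 0
  then show ?case by simp
next
  case (Suc n)
  have shift: "A - mat (of_nat (Suc n)) + mat 1 = A - mat (of_nat n)"
    by (simp add: mat_add algebra_simps)
  have "(A - mat (of_nat (Suc n))) ** B1 = B1 ** (A - mat (of_nat (Suc n)))"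
    using commute_diff_mat[OF AB[symmetric]] by simp
  from F14_add_one[OF C1inv C2inv this BC1 BC2 CC, unfolded shift] Suc.IH show ?case
    by (simp add: algebra_simps)
qed

lemma sum_F14_increment:
  "(\<Sum>j\<in>S. F14_increment (g j) B1 B2 C1 C2 m1 m2 m3)
    = B1 ** mulx1 (\<lambda>k1 k2 k3. \<Sum>j\<in>S. F14 (g j) (B1 + mat 1) B2 (C1 + mat 1) C2 k1 k2 k3) m1 m2 m3
        ** matrix_inv C1
      + mulx2 (\<lambda>k1 k2 k3. \<Sum>j\<in>S. F14 (g j) B1 (B2 + mat 1) C1 (C2 + mat 1) k1 k2 k3) m1 m2 m3
        ** B2 ** matrix_inv C2
      + B1 ** mulx3 (\<lambda>k1 k2 k3. \<Sum>j\<in>S. F14 (g j) (B1 + mat 1) B2 C1 (C2 + mat 1) k1 k2 k3) m1 m2 m3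
        ** matrix_inv C2"
  by (simp add: F14_increment_def mulx1_def mulx2_def mulx3_def sum.distrib
      matrix_mul_sum_left matrix_mul_sum_right)

theorem mainTheorem19:
  fixes A1 B1 B2 C1 C2 :: "complex ^ 'n::finite ^ 'n"
    and n :: nat
  assumes C1inv: "\<forall>m::nat. invertible (C1 + mat (of_nat m))"
    and C2inv: "\<forall>m::nat. invertible (C2 + mat (of_nat m))"
    and AB: "A1 ** B1 = B1 ** A1"
    and BC1: "B2 ** C1 = C1 ** B2"
    and BC2: "B2 ** C2 = C2 ** B2"
    and CC: "C1 ** C2 = C2 ** C1"
    and n: "n \<ge> 1"
    and Ainv: "\<forall>m::nat. invertible (A1 + mat (of_nat m))"
  shows "(\<forall>m1 m2 m3.
      F14 (A1 + mat (of_nat n)) B1 B2 C1 C2 m1 m2 m3 =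
        F14 A1 B1 B2 C1 C2 m1 m2 m3
      + B1 ** mulx1 (\<lambda>k1 k2 k3. \<Sum>n1 = 1..n.
            F14 (A1 + mat (of_nat n1)) (B1 + mat 1) B2 (C1 + mat 1) C2 k1 k2 k3) m1 m2 m3
          ** matrix_inv C1
      + mulx2 (\<lambda>k1 k2 k3. \<Sum>n1 = 1..n.
            F14 (A1 + mat (of_nat n1)) B1 (B2 + mat 1) C1 (C2 + mat 1) k1 k2 k3) m1 m2 m3
          ** B2 ** matrix_inv C2
      + B1 ** mulx3 (\<lambda>k1 k2 k3. \<Sum>n1 = 1..n.
            F14 (A1 + mat (of_nat n1)) (B1 + mat 1) B2 C1 (C2 + mat 1) k1 k2 k3) m1 m2 m3
          ** matrix_inv C2)
    \<and>
    ((\<forall>n1\<le>n. invertible (A1 - mat (of_nat n1))) \<longrightarrow>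
     (\<forall>m1 m2 m3.
      F14 (A1 - mat (of_nat n)) B1 B2 C1 C2 m1 m2 m3 =
        F14 A1 B1 B2 C1 C2 m1 m2 m3
      - B1 ** mulx1 (\<lambda>k1 k2 k3. \<Sum>n1 = 0..n-1.
            F14 (A1 - mat (of_nat n1)) (B1 + mat 1) B2 (C1 + mat 1) C2 k1 k2 k3) m1 m2 m3
          ** matrix_inv C1
      - mulx2 (\<lambda>k1 k2 k3. \<Sum>n1 = 0..n-1.
            F14 (A1 - mat (of_nat n1)) B1 (B2 + mat 1) C1 (C2 + mat 1) k1 k2 k3) m1 m2 m3
          ** B2 ** matrix_inv C2
      - B1 ** mulx3 (\<lambda>k1 k2 k3. \<Sum>n1 = 0..n-1.
            F14 (A1 - mat (of_nat n1)) (B1 + mat 1) B2 C1 (C2 + mat 1) k1 k2 k3) m1 m2 m3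
          ** matrix_inv C2))"
proof -
  have "{0..n - 1} = {..<n}"
    using n by auto
  then show ?thesis
    using F14_add_of_nat[OF C1inv C2inv AB BC1 BC2 CC] F14_diff_of_nat[OF C1inv C2inv AB BC1 BC2 CC]
    by (simp add: sum_F14_increment add.assoc diff_diff_eq)
qed

end
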